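(* Let $f:2^{[k]}\to\mathbb{R}$ be submodular and normalized, and let $\bar f=2^{-k}\sum_{S\subseteq[k]}f(S)$. Then $\bar f\ge f([k])/2$, and $\bar f=f([k])/2$ if and only if $f$ is modular.
   Context: $[k]=\{1,\dots,k\}$. $f$ is submodular if $f(S)+f(T)\ge f(S\cup T)+f(S\cap T)$ for all $S,T\subseteq[k]$, modular if this holds with equality for all $S,T$, normalized if $f(\emptyset)=0$. *)

theory Defs
  imports Complex_Main
begin

definition submodular_on :: "nat \<Rightarrow> (nat set \<Rightarrow> real) \<Rightarrow> bool" where
  "submodular_on k f \<longleftrightarrow>
     (\<forall>S T. S \<subseteq> {1..k} \<longrightarrow> T \<subseteq> {1..k} \<longrightarrow> f S + f T \<ge> f (S \<union> T) + f (S \<inter> T))"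

definition modular_on :: "nat \<Rightarrow> (nat set \<Rightarrow> real) \<Rightarrow> bool" where
  "modular_on k f \<longleftrightarrow>
     (\<forall>S T. S \<subseteq> {1..k} \<longrightarrow> T \<subseteq> {1..k} \<longrightarrow> f S + f T = f (S \<union> T) + f (S \<inter> T))"

definition normalized :: "(nat set \<Rightarrow> real) \<Rightarrow> bool" where
  "normalized f \<longleftrightarrow> f {} = 0"

definition avg_value :: "nat \<Rightarrow> (nat set \<Rightarrow> real) \<Rightarrow> real" where
  "avg_value k f = (\<Sum>S\<in>Pow {1..k}. f S) / 2 ^ k"

end

theory Submission
  imports Defs
begin

text \<open>Submodularity at a set S and its complement V - S, together with f {} = 0, gives
  f S + f (V - S) \<ge> f V; averaging over S, which ranges over the same sets as V - S, gives the
  bound. Equality forces f S + f (V - S) = f V for every S, and under these identities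
  submodularity at V - S and V - T is the reverse of submodularity at S and T.\<close>

lemma submodular_complement_ge:
  fixes f :: "'a set \<Rightarrow> real"
  assumes submod: "\<And>S T. S \<subseteq> V \<Longrightarrow> T \<subseteq> V \<Longrightarrow> f (S \<union> T) + f (S \<inter> T) \<le> f S + f T"
    and "f {} = 0" and "S \<subseteq> V"
  shows "f V \<le> f S + f (V - S)"
proof -
  have "f (S \<union> (V - S)) + f (S \<inter> (V - S)) \<le> f S + f (V - S)"
    using \<open>S \<subseteq> V\<close> by (intro submod) auto
  moreover have "S \<union> (V - S) = V" "S \<inter> (V - S) = {}" using \<open>S \<subseteq> V\<close> by auto
  ultimately show ?thesis using \<open>f {} = 0\<close> by simp
qed

lemma modular_complement_eq:
  fixes f :: "'a set \<Rightarrow> real"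
  assumes modular: "\<And>S T. S \<subseteq> V \<Longrightarrow> T \<subseteq> V \<Longrightarrow> f S + f T = f (S \<union> T) + f (S \<inter> T)"
    and "f {} = 0" and "S \<subseteq> V"
  shows "f S + f (V - S) = f V"
proof -
  have "f S + f (V - S) = f (S \<union> (V - S)) + f (S \<inter> (V - S))"
    using \<open>S \<subseteq> V\<close> by (intro modular) auto
  moreover have "S \<union> (V - S) = V" "S \<inter> (V - S) = {}" using \<open>S \<subseteq> V\<close> by auto
  ultimately show ?thesis using \<open>f {} = 0\<close> by simp
qed

lemma modular_if_complement_eq:
  fixes f :: "'a set \<Rightarrow> real"
  assumes submod: "\<And>S T. S \<subseteq> V \<Longrightarrow> T \<subseteq> V \<Longrightarrow> f (S \<union> T) + f (S \<inter> T) \<le> f S + f T"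
    and compl: "\<And>S. S \<subseteq> V \<Longrightarrow> f S + f (V - S) = f V"
    and "S \<subseteq> V" and "T \<subseteq> V"
  shows "f S + f T = f (S \<union> T) + f (S \<inter> T)"
proof -
  have "f ((V - S) \<union> (V - T)) + f ((V - S) \<inter> (V - T)) \<le> f (V - S) + f (V - T)"
    by (intro submod) auto
  moreover have "(V - S) \<union> (V - T) = V - (S \<inter> T)" "(V - S) \<inter> (V - T) = V - (S \<union> T)"
    by auto
  ultimately have "f (V - (S \<inter> T)) + f (V - (S \<union> T)) \<le> f (V - S) + f (V - T)"
    by simp
  moreover have "S \<inter> T \<subseteq> V" "S \<union> T \<subseteq> V" using assms(3,4) by auto
  ultimately have "f V - f (S \<inter> T) + (f V - f (S \<union> T)) \<le> f V - f S + (f V - f T)"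
    using compl assms(3,4) by (metis add_diff_cancel_left')
  then show ?thesis using submod[OF assms(3,4)] by linarith
qed

lemma sum_Pow_complement: "(\<Sum>S\<in>Pow V. f (V - S)) = (\<Sum>S\<in>Pow V. f S)"
  by (rule sum.reindex_bij_witness[where i = "\<lambda>S. V - S" and j = "\<lambda>S. V - S"]) auto

lemma avg_value_minus_half:
  "avg_value k f - f {1..k} / 2 =
     (\<Sum>S\<in>Pow {1..k}. f S + f ({1..k} - S) - f {1..k}) / 2 ^ (k + 1)"
proof -
  let ?V = "{1..k::nat}"
  have "(\<Sum>S\<in>Pow ?V. f S + f (?V - S) - f ?V) = 2 * (\<Sum>S\<in>Pow ?V. f S) - 2 ^ k * f ?V"
    by (simp add: sum.distrib sum_subtractf sum_Pow_complement card_Pow)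
  then show ?thesis by (simp add: avg_value_def field_simps)
qed

theorem lemma6:
  fixes k :: nat and f :: "nat set \<Rightarrow> real"
  assumes "submodular_on k f" and "normalized f"
  shows "avg_value k f \<ge> f {1..k} / 2 \<and>
         (avg_value k f = f {1..k} / 2 \<longleftrightarrow> modular_on k f)"
proof -
  let ?V = "{1..k}"
  let ?gap = "\<lambda>S. f S + f (?V - S) - f ?V"
  have submod: "\<And>S T. S \<subseteq> ?V \<Longrightarrow> T \<subseteq> ?V \<Longrightarrow> f (S \<union> T) + f (S \<inter> T) \<le> f S + f T"
    using assms(1) by (simp add: submodular_on_def)
  have "f {} = 0" using assms(2) by (simp add: normalized_def)
  have gap_nonneg: "\<And>S. S \<in> Pow ?V \<Longrightarrow> ?gap S \<ge> 0"
    using submodular_complement_ge[OF submod \<open>f {} = 0\<close>] by simp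
  have lower_bound: "0 \<le> avg_value k f - f ?V / 2"
    unfolding avg_value_minus_half using gap_nonneg by (intro divide_nonneg_pos sum_nonneg) auto
  have "avg_value k f = f ?V / 2 \<longleftrightarrow> (\<Sum>S\<in>Pow ?V. ?gap S) = 0"
    unfolding eq_iff_diff_eq_0[of "avg_value k f"] avg_value_minus_half by simp
  also have "\<dots> \<longleftrightarrow> (\<forall>S\<in>Pow ?V. ?gap S = 0)"
    using gap_nonneg by (intro sum_nonneg_eq_0_iff) simp_all
  also have "\<dots> \<longleftrightarrow> modular_on k f"
  proof
    assume "\<forall>S\<in>Pow ?V. ?gap S = 0"
    then have compl: "\<And>S. S \<subseteq> ?V \<Longrightarrow> f S + f (?V - S) = f ?V" by simp
    show "modular_on k f"
      unfolding modular_on_def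
      using modular_if_complement_eq[OF submod compl] by blast
  next
    assume "modular_on k f"
    then show "\<forall>S\<in>Pow ?V. ?gap S = 0"
      using modular_complement_eq[of ?V f] \<open>f {} = 0\<close> by (simp add: modular_on_def)
  qed
  finally show ?thesis using lower_bound by simp
qed

end
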